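(* Let $\mathcal P$ be a CSP based on a CSP $\mathcal{BASE}$. Then $\mathcal P$ is arc consistent if and only if $\mathcal P$ is membership rule consistent with respect to $\mathcal{BASE}$.
   Context: A constraint on variables $x_1,\dots,x_n$ with domains $D_1,\dots,D_n$ is a subset $C\subseteq D_1\times\dots\times D_n$; $d[x]$ denotes the component at $x$ of a tuple $d$. A CSP consists of finitely many variables with domains and a finite set of constraints on subsequences of them. For $C\subseteq D_1\times\dots\times D_n$ and a permutation $\pi$ of $[1..n]$, $C^\pi$ is defined by $(a_1,\dots,a_n)\in C^\pi$ iff $(a_{\pi(1)},\dots,a_{\pi(n)})\in C$ (domains permuted accordingly). A constraint $C\subseteq D_1\times\dots\times D_n$ is based on $E\subseteq D'_1\times\dots\times D'_n$ if $D_i\subseteq D'_i$ for all $i$ and $C=E\cap(D_1\times\dots\times D_n)$. A CSP $\mathcal P$ is based on a CSP $\mathcal{BASE}$ if each constraint $C$ of $\mathcal P$ (taken with the domains its variables have in $\mathcal P$) is based on $f(C)^\pi$ for some constraint $f(C)$ of $\mathcal{BASE}$ and some permutation $\pi$ (variables of $C$ and of $f(C)^\pi$ being identified positionally). A membership rule for $C$ is $x_{j_1}\in S_1,\dots,x_{j_m}\in S_m\to y\neq a$ with $x_{j_k},y$ variables of $C$, each $S_k$ a subset of the domain of $x_{j_k}$ in $f(C)^\pi$ and $a$ in the domain of $y$ there; it is valid for a constraint $E$ (on the same positions) if every $d\in E$ with $d[x_{j_k}]\in S_k$ for all $k$ satisfies $d[y]\neq a$. A constraint $C$ of $\mathcal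 P$ is closed under this rule if: whenever the domain of each $x_{j_k}$ in $\mathcal P$ is included in $S_k$, the element $a$ does not belong to the domain of $y$ in $\mathcal P$. $C$ is membership rule consistent (w.r.t. $\mathcal{BASE}$) if it is closed under all membership rules valid for $f(C)^\pi$; $\mathcal P$ is membership rule consistent if all its constraints are. A constraint $C$ of $\mathcal P$ is arc consistent if for every variable $x$ of $C$ and every $a$ in the domain of $x$ in $\mathcal P$ there is $d\in C$ with $d[x]=a$; $\mathcal P$ is arc consistent if all its constraints are. *)

theory Defs
  imports "HOL-Combinatorics.Permutations"
begin

text \<open>A constraint is a pair (scope, relation): the scope is a list of distinct
  variables x_1..x_n (positions 0..n-1), the relation a set of tuples (lists of
  length n) whose i-th component lies in the domain of the i-th variable.
  The component d[x] of a tuple d at variable x = xs!i is d!i.\<close>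

record ('v,'a) csp =
  vars :: "'v set"
  dom  :: "'v \<Rightarrow> 'a set"
  cons :: "('v list \<times> 'a list set) set"

definition tuples :: "'a set list \<Rightarrow> 'a list set" where
  "tuples Ds = {d. length d = length Ds \<and> (\<forall>i<length Ds. d ! i \<in> Ds ! i)}"

definition is_csp :: "('v,'a) csp \<Rightarrow> bool" where
  "is_csp P \<longleftrightarrow> finite (vars P) \<and> finite (cons P) \<and>
     (\<forall>(xs, R) \<in> cons P. distinct xs \<and> set xs \<subseteq> vars P \<and>
        R \<subseteq> tuples (map (dom P) xs))"

definition cdoms :: "('v,'a) csp \<Rightarrow> 'v list \<Rightarrow> 'a set list" where
  "cdoms P xs = map (dom P) xs"

definition perm_tuple :: "(nat \<Rightarrow> nat) \<Rightarrow> 'a list \<Rightarrow> 'a list" where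
  "perm_tuple \<pi> a = map (\<lambda>i. a ! \<pi> i) [0..<length a]"

definition perm_rel :: "(nat \<Rightarrow> nat) \<Rightarrow> 'a list set \<Rightarrow> 'a list set" where
  "perm_rel \<pi> R = {a. perm_tuple \<pi> a \<in> R}"

text \<open>Domains permuted accordingly: position j of C^\<pi> gets domain D_(\<pi>^-1 j), so that
  a \<in> tuples (perm_doms \<pi> Ds) iff perm_tuple \<pi> a \<in> tuples Ds.\<close>
definition perm_doms :: "(nat \<Rightarrow> nat) \<Rightarrow> 'a set list \<Rightarrow> 'a set list" where
  "perm_doms \<pi> Ds = map (\<lambda>j. Ds ! inv \<pi> j) [0..<length Ds]"

definition based_on_constr :: "'a list set \<Rightarrow> 'a set list \<Rightarrow> 'a list set \<Rightarrow> 'a set list \<Rightarrow> bool" where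
  "based_on_constr C Ds E Ds' \<longleftrightarrow> length Ds = length Ds' \<and>
     (\<forall>i<length Ds. Ds ! i \<subseteq> Ds' ! i) \<and> C = E \<inter> tuples Ds"

text \<open>P is based on BASE, witnessed by g, which assigns to each constraint c of P
  a constraint f(c) of BASE and a permutation \<pi> (the pair g c = (f c, \<pi>)).\<close>
definition based_via ::
  "('v,'a) csp \<Rightarrow> ('w,'a) csp \<Rightarrow> ('v list \<times> 'a list set \<Rightarrow> ('w list \<times> 'a list set) \<times> (nat \<Rightarrow> nat)) \<Rightarrow> bool" where
  "based_via P B g \<longleftrightarrow> (\<forall>c \<in> cons P. case g c of (e, \<pi>) \<Rightarrow>
      e \<in> cons B \<and> length (fst e) = length (fst c) \<and> \<pi> permutes {..<length (fst c)} \<and>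
      based_on_constr (snd c) (cdoms P (fst c)) (perm_rel \<pi> (snd e)) (perm_doms \<pi> (cdoms B (fst e))))"

text \<open>Membership rule x_{j_1} \<in> S_1, ..., x_{j_m} \<in> S_m \<rightarrow> y \<noteq> a, given by the list
  prem = [(j_1,S_1),...,(j_m,S_m)] of positions and sets, the position y and value a.
  It is a rule for a constraint whose based-on constraint f(C)^\<pi> has domains Ds'.\<close>
definition is_mrule :: "'a set list \<Rightarrow> (nat \<times> 'a set) list \<Rightarrow> nat \<Rightarrow> 'a \<Rightarrow> bool" where
  "is_mrule Ds' prem y a \<longleftrightarrow>
     (\<forall>(j, S) \<in> set prem. j < length Ds' \<and> S \<subseteq> Ds' ! j) \<and> y < length Ds' \<and> a \<in> Ds' ! y"

definition mrule_valid :: "'a list set \<Rightarrow> (nat \<times> 'a set) list \<Rightarrow> nat \<Rightarrow> 'a \<Rightarrow> bool" where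
  "mrule_valid E prem y a \<longleftrightarrow>
     (\<forall>d \<in> E. (\<forall>(j, S) \<in> set prem. d ! j \<in> S) \<longrightarrow> d ! y \<noteq> a)"

definition mrule_closed :: "'a set list \<Rightarrow> (nat \<times> 'a set) list \<Rightarrow> nat \<Rightarrow> 'a \<Rightarrow> bool" where
  "mrule_closed Ds prem y a \<longleftrightarrow>
     (\<forall>(j, S) \<in> set prem. Ds ! j \<subseteq> S) \<longrightarrow> a \<notin> Ds ! y"

definition mr_consistent ::
  "('v,'a) csp \<Rightarrow> ('w,'a) csp \<Rightarrow> ('v list \<times> 'a list set \<Rightarrow> ('w list \<times> 'a list set) \<times> (nat \<Rightarrow> nat)) \<Rightarrow> bool" where
  "mr_consistent P B g \<longleftrightarrow> (\<forall>c \<in> cons P. case g c of (e, \<pi>) \<Rightarrow>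
      (\<forall>prem y a. is_mrule (perm_doms \<pi> (cdoms B (fst e))) prem y a \<and>
                  mrule_valid (perm_rel \<pi> (snd e)) prem y a \<longrightarrow>
                  mrule_closed (cdoms P (fst c)) prem y a))"

definition arc_consistent :: "('v,'a) csp \<Rightarrow> bool" where
  "arc_consistent P \<longleftrightarrow> (\<forall>(xs, R) \<in> cons P. \<forall>i < length xs. \<forall>a \<in> dom P (xs ! i).
      \<exists>d \<in> R. d ! i = a)"

end

theory Submission
  imports Defs
begin

text \<open>Both directions work constraint by constraint. If every value has a support in C,
  take a valid rule whose premise sets contain the current domains: a support of a value a
  of y satisfies the premises, since C \<subseteq> f(C)^\<pi> and its entries lie in the domains, so
  validity says its y-entry is not a; hence a is not in the domain of y. Conversely, if a
  in the domain of x_i had no support, the rule x_1 \<in> D_1, ..., x_n \<in> D_n \<rightarrow> x_i \<noteq> a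
  would be valid for f(C)^\<pi> (every tuple of it satisfying the premises lies in C), and
  closure under it would remove a.\<close>

definition constr_arc_consistent :: "'a list set \<Rightarrow> 'a set list \<Rightarrow> bool" where
  "constr_arc_consistent C Ds \<longleftrightarrow> (\<forall>i < length Ds. \<forall>a \<in> Ds ! i. \<exists>d \<in> C. d ! i = a)"

definition mrule_consistent :: "'a set list \<Rightarrow> 'a list set \<Rightarrow> 'a set list \<Rightarrow> bool" where
  "mrule_consistent Ds E Ds' \<longleftrightarrow>
     (\<forall>prem y a. is_mrule Ds' prem y a \<and> mrule_valid E prem y a \<longrightarrow> mrule_closed Ds prem y a)"

lemma arc_consistent_iff_constr_arc_consistent:
  "arc_consistent P \<longleftrightarrow> (\<forall>(xs, R) \<in> cons P. constr_arc_consistent R (cdoms P xs))"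
  by (simp add: arc_consistent_def constr_arc_consistent_def cdoms_def)

lemma mr_consistent_iff_mrule_consistent:
  "mr_consistent P B g \<longleftrightarrow> (\<forall>c \<in> cons P. case g c of (e, \<pi>) \<Rightarrow>
      mrule_consistent (cdoms P (fst c)) (perm_rel \<pi> (snd e)) (perm_doms \<pi> (cdoms B (fst e))))"
  by (simp add: mr_consistent_def mrule_consistent_def)

lemma length_perm_rel:
  assumes "R \<subseteq> tuples Ds" and "d \<in> perm_rel \<pi> R"
  shows "length d = length Ds"
proof -
  have "length (perm_tuple \<pi> d) = length Ds"
    using assms by (auto simp: perm_rel_def tuples_def)
  then show ?thesis by (simp add: perm_tuple_def)
qed

lemma length_perm_doms [simp]: "length (perm_doms \<pi> Ds) = length Ds"
  by (simp add: perm_doms_def)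

lemma constr_arc_consistent_imp_mrule_consistent:
  assumes based: "based_on_constr C Ds E Ds'" and ac: "constr_arc_consistent C Ds"
  shows "mrule_consistent Ds E Ds'"
  unfolding mrule_consistent_def
proof (intro allI impI)
  fix prem y a
  assume rule: "is_mrule Ds' prem y a \<and> mrule_valid E prem y a"
  have len: "length Ds = length Ds'" and C: "C = E \<inter> tuples Ds"
    using based by (auto simp: based_on_constr_def)
  show "mrule_closed Ds prem y a"
    unfolding mrule_closed_def
  proof (intro impI notI)
    assume prem_covers: "\<forall>(j, S) \<in> set prem. Ds ! j \<subseteq> S" and a: "a \<in> Ds ! y"
    have "y < length Ds" using rule len by (simp add: is_mrule_def)
    then obtain d where d: "d \<in> C" "d ! y = a"
      using ac a by (auto simp: constr_arc_consistent_def)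
    have "\<forall>(j, S) \<in> set prem. d ! j \<in> S"
    proof clarify
      fix j S assume js: "(j, S) \<in> set prem"
      then have "j < length Ds" using rule len by (auto simp: is_mrule_def)
      then have "d ! j \<in> Ds ! j" using d C by (auto simp: tuples_def)
      then show "d ! j \<in> S" using prem_covers js by auto
    qed
    then have "d ! y \<noteq> a" using rule d C by (auto simp: mrule_valid_def)
    then show False using d by simp
  qed
qed

lemma mrule_consistent_imp_constr_arc_consistent:
  assumes based: "based_on_constr C Ds E Ds'" and E_len: "\<forall>d \<in> E. length d = length Ds'"
    and mr: "mrule_consistent Ds E Ds'"
  shows "constr_arc_consistent C Ds"
  unfolding constr_arc_consistent_def
proof (intro allI impI ballI)
  fix i a assume i: "i < length Ds" and a: "a \<in> Ds ! i"
  have len: "length Ds = length Ds'" and sub: "\<forall>j < length Ds. Ds ! j \<subseteq> Ds' ! j"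
    and C: "C = E \<inter> tuples Ds"
    using based by (auto simp: based_on_constr_def)
  define prem where "prem = map (\<lambda>j. (j, Ds ! j)) [0..<length Ds]"
  show "\<exists>d \<in> C. d ! i = a"
  proof (rule ccontr)
    assume unsupported: "\<not> (\<exists>d \<in> C. d ! i = a)"
    have "is_mrule Ds' prem i a"
      using len sub i a by (auto simp: is_mrule_def prem_def)
    moreover have "mrule_valid E prem i a"
      unfolding mrule_valid_def
    proof (intro ballI impI)
      fix d assume d: "d \<in> E" and "\<forall>(j, S) \<in> set prem. d ! j \<in> S"
      then have "d \<in> tuples Ds"
        using E_len len by (auto simp: tuples_def prem_def)
      then show "d ! i \<noteq> a" using d C unsupported by auto
    qed
    ultimately have "mrule_closed Ds prem i a"
      using mr by (simp add: mrule_consistent_def)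
    then show False using a by (auto simp: mrule_closed_def prem_def)
  qed
qed

lemma constr_arc_consistent_iff_mrule_consistent:
  assumes "based_on_constr C Ds E Ds'" and "\<forall>d \<in> E. length d = length Ds'"
  shows "constr_arc_consistent C Ds \<longleftrightarrow> mrule_consistent Ds E Ds'"
  using assms constr_arc_consistent_imp_mrule_consistent
    mrule_consistent_imp_constr_arc_consistent by blast

text \<open>Membership rules cannot constrain the length of a tuple, so the lengths of the tuples
  of f(C)^\<pi> must come from is_csp BASE.\<close>

theorem mainTheorem7:
  fixes P :: "('v,'a) csp" and BASE :: "('w,'a) csp"
    and g :: "'v list \<times> 'a list set \<Rightarrow> ('w list \<times> 'a list set) \<times> (nat \<Rightarrow> nat)"
  assumes "is_csp P" and "is_csp BASE" and "based_via P BASE g"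
  shows "arc_consistent P \<longleftrightarrow> mr_consistent P BASE g"
proof -
  have "constr_arc_consistent (snd c) (cdoms P (fst c)) \<longleftrightarrow> (case g c of (e, \<pi>) \<Rightarrow>
      mrule_consistent (cdoms P (fst c)) (perm_rel \<pi> (snd e)) (perm_doms \<pi> (cdoms BASE (fst e))))"
    if c: "c \<in> cons P" for c
  proof -
    obtain e \<pi> where ge: "g c = (e, \<pi>)" by (cases "g c")
    have "e \<in> cons BASE" and based:
      "based_on_constr (snd c) (cdoms P (fst c)) (perm_rel \<pi> (snd e)) (perm_doms \<pi> (cdoms BASE (fst e)))"
      using assms(3) c ge by (auto simp: based_via_def)
    have "snd e \<subseteq> tuples (cdoms BASE (fst e))"
      using assms(2) \<open>e \<in> cons BASE\<close> by (cases e) (auto simp: is_csp_def cdoms_def)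
    then have "\<forall>d \<in> perm_rel \<pi> (snd e). length d = length (perm_doms \<pi> (cdoms BASE (fst e)))"
      using length_perm_rel by auto
    with based show ?thesis
      unfolding ge by (simp add: constr_arc_consistent_iff_mrule_consistent)
  qed
  then show ?thesis
    unfolding arc_consistent_iff_constr_arc_consistent mr_consistent_iff_mrule_consistent
    by (simp add: split_beta)
qed

end
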